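(* Let $M,K$ be real symmetric positive definite $N\times N$ matrices, $\Delta t>0$, and let $(f_{k+\frac12})_{k\ge0}$ be vectors in $\mathbb{R}^N$. Let $(q_n,p_n)_{n\ge0}$ satisfy, for all $n\ge0$, $$q_{n+1}=q_n+\Delta t\,M^{-1}\frac{p_n+p_{n+1}}2,\qquad p_{n+1}=p_n-\Delta t\,K\frac{q_n+q_{n+1}}2+\Delta t\,f_{n+\frac12}.$$ Let $E_n:=\frac12p_n^TM^{-1}p_n+\frac12q_n^TKq_n$ and $|f|_{M^{-1}}:=\sqrt{f^TM^{-1}f}$. Then for every $n\ge0$, $$\big|\sqrt{E_n}-\sqrt{E_0}\big|\le\Delta t\,2^{-1/2}\sum_{k=0}^{n-1}|f_{k+\frac12}|_{M^{-1}}.$$ *)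

theory Defs
  imports "HOL-Analysis.Analysis"
begin

definition sym_pos_def_mat :: "real^'n^'n \<Rightarrow> bool" where
  "sym_pos_def_mat A \<longleftrightarrow> transpose A = A \<and> (\<forall>x. x \<noteq> 0 \<longrightarrow> x \<bullet> (A *v x) > 0)"

definition energy :: "real^'n^'n \<Rightarrow> real^'n^'n \<Rightarrow> real^'n \<Rightarrow> real^'n \<Rightarrow> real" where
  "energy M K q p = (1/2) * (p \<bullet> (matrix_inv M *v p)) + (1/2) * (q \<bullet> (K *v q))"

definition norm_Minv :: "real^'n^'n \<Rightarrow> real^'n \<Rightarrow> real" where
  "norm_Minv M f = sqrt (f \<bullet> (matrix_inv M *v f))"

end

theory Submission
  imports Defs
begin

text \<open>Write \<open>W = M\<inverse>\<close>. One midpoint step gives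
  \<open>2 (E(n+1) - E(n)) = \<Delta>t (p(n) + p(n+1)) \<bullet> W f(n)\<close>: the terms involving \<open>K\<close> cancel because
  \<open>K\<close> and \<open>W\<close> are symmetric, so without forcing the scheme conserves the energy exactly.
  Since \<open>p \<bullet> W p \<le> 2 E\<close>, Cauchy-Schwarz for the form \<open>W\<close> bounds the right-hand side by
  \<open>\<Delta>t sqrt 2 (sqrt E(n) + sqrt E(n+1)) |f(n)|\<^sub>W\<close>. Dividing
  \<open>E(n+1) - E(n) = (sqrt E(n+1) - sqrt E(n)) (sqrt E(n+1) + sqrt E(n))\<close> by the sum of the roots
  bounds one step of \<open>sqrt E\<close>, and telescoping gives the theorem.\<close>

lemma nonneg_quadratic_imp_discriminant_le:
  fixes a b c :: real
  assumes nonneg: "\<And>t. 0 \<le> a + 2 * t * b + t\<^sup>2 * c" and "0 \<le> c"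
  shows "b\<^sup>2 \<le> a * c"
proof (cases "c = 0")
  case True
  show ?thesis
  proof (rule ccontr)
    assume "\<not> ?thesis"
    with True have "b \<noteq> 0" by auto
    have "0 \<le> a + 2 * (- (a + 1) / (2 * b)) * b"
      using nonneg[of "- (a + 1) / (2 * b)"] True by simp
    also have "\<dots> = -1" using \<open>b \<noteq> 0\<close> by (simp add: field_simps)
    finally show False by simp
  qed
next
  case False
  with \<open>0 \<le> c\<close> have "c > 0" by simp
  have "0 \<le> a + 2 * (- b / c) * b + (- b / c)\<^sup>2 * c" by (rule nonneg)
  also have "\<dots> = a - b\<^sup>2 / c" using \<open>c > 0\<close> by (simp add: field_simps power2_eq_square)
  finally show ?thesis using \<open>c > 0\<close> by (simp add: field_simps)
qed

lemma inner_matrix_vector_transpose: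
  fixes A :: "real^'n^'n"
  shows "x \<bullet> (A *v y) = y \<bullet> (transpose A *v x)"
  by (simp add: dot_lmul_matrix[symmetric] inner_commute)

lemma transpose_eq_iff_inner_matrix_vector_commute:
  fixes A :: "real^'n^'n"
  shows "transpose A = A \<longleftrightarrow> (\<forall>x y. x \<bullet> (A *v y) = y \<bullet> (A *v x))"
proof -
  have "(\<forall>x y. x \<bullet> (A *v y) = y \<bullet> (A *v x)) \<longleftrightarrow> (\<forall>x y. y \<bullet> (transpose A *v x) = y \<bullet> (A *v x))"
    by (metis inner_matrix_vector_transpose)
  also have "\<dots> \<longleftrightarrow> (\<forall>x. transpose A *v x = A *v x)"
    using vector_eq_ldot by blast
  also have "\<dots> \<longleftrightarrow> transpose A = A"
    by (rule matrix_eq[symmetric])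
  finally show ?thesis ..
qed

lemma quadratic_form_cauchy_schwarz:
  fixes A :: "real^'n^'n"
  assumes "transpose A = A" and nonneg: "\<And>z. 0 \<le> z \<bullet> (A *v z)"
  shows "\<bar>x \<bullet> (A *v y)\<bar> \<le> sqrt (x \<bullet> (A *v x)) * sqrt (y \<bullet> (A *v y))"
proof -
  have sym: "y \<bullet> (A *v x) = x \<bullet> (A *v y)"
    using assms(1) transpose_eq_iff_inner_matrix_vector_commute by blast
  have "(x \<bullet> (A *v y))\<^sup>2 \<le> (x \<bullet> (A *v x)) * (y \<bullet> (A *v y))"
  proof (rule nonneg_quadratic_imp_discriminant_le[OF _ nonneg])
    fix t :: real
    have "(x + t *\<^sub>R y) \<bullet> (A *v (x + t *\<^sub>R y))
          = x \<bullet> (A *v x) + 2 * t * (x \<bullet> (A *v y)) + t\<^sup>2 * (y \<bullet> (A *v y))"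
      using sym by (simp add: matrix_vector_right_distrib matrix_vector_mult_scaleR
          inner_add_left inner_add_right power2_eq_square algebra_simps)
    then show "0 \<le> x \<bullet> (A *v x) + 2 * t * (x \<bullet> (A *v y)) + t\<^sup>2 * (y \<bullet> (A *v y))"
      using nonneg[of "x + t *\<^sub>R y"] by simp
  qed
  then have "sqrt ((x \<bullet> (A *v y))\<^sup>2) \<le> sqrt ((x \<bullet> (A *v x)) * (y \<bullet> (A *v y)))"
    by (rule real_sqrt_le_mono)
  then show ?thesis by (simp add: real_sqrt_mult)
qed

lemma sym_pos_def_mat_nonneg:
  assumes "sym_pos_def_mat A"
  shows "0 \<le> x \<bullet> (A *v x)"
  using assms unfolding sym_pos_def_mat_def by (cases "x = 0") (auto intro: less_imp_le)

lemma sym_pos_def_mat_matrix_inv_right: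
  fixes A :: "real^'n^'n"
  assumes "sym_pos_def_mat A"
  shows "A *v (matrix_inv A *v x) = x"
proof -
  have "\<forall>x. A *v x = 0 \<longrightarrow> x = 0"
    using assms unfolding sym_pos_def_mat_def by force
  then have "invertible A"
    unfolding invertible_left_inverse matrix_left_invertible_ker .
  then have "A ** matrix_inv A = mat 1"
    unfolding invertible_def matrix_inv_def by (metis (mono_tags, lifting) someI_ex)
  then show ?thesis by (simp add: matrix_vector_mul_assoc)
qed

lemma sym_pos_def_mat_matrix_inv:
  fixes A :: "real^'n^'n"
  assumes "sym_pos_def_mat A"
  shows "sym_pos_def_mat (matrix_inv A)"
proof -
  let ?W = "matrix_inv A"
  have sym: "\<And>x y. x \<bullet> (A *v y) = y \<bullet> (A *v x)"
    using assms transpose_eq_iff_inner_matrix_vector_commute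
    unfolding sym_pos_def_mat_def by blast
  have right: "\<And>x. A *v (?W *v x) = x"
    using sym_pos_def_mat_matrix_inv_right[OF assms] .
  have form: "x \<bullet> (?W *v y) = (?W *v y) \<bullet> (A *v (?W *v x))" for x y
    by (simp add: right inner_commute)
  have "x \<bullet> (?W *v y) = y \<bullet> (?W *v x)" for x y
    using form[of x y] form[of y x] sym by simp
  then have "transpose ?W = ?W"
    using transpose_eq_iff_inner_matrix_vector_commute by blast
  moreover have "x \<bullet> (?W *v x) > 0" if "x \<noteq> 0" for x
  proof -
    have "?W *v x \<noteq> 0" using right[of x] that by auto
    then show ?thesis
      using assms form[of x x] unfolding sym_pos_def_mat_def by (simp add: inner_commute)
  qed
  ultimately show ?thesis unfolding sym_pos_def_mat_def by blast
qed

lemma energy_nonneg: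
  assumes "sym_pos_def_mat M" and "sym_pos_def_mat K"
  shows "0 \<le> energy M K q p"
  using sym_pos_def_mat_nonneg[OF sym_pos_def_mat_matrix_inv[OF assms(1)], of p]
    sym_pos_def_mat_nonneg[OF assms(2), of q]
  unfolding energy_def by simp

lemma kinetic_le_energy:
  assumes "sym_pos_def_mat K"
  shows "p \<bullet> (matrix_inv M *v p) \<le> 2 * energy M K q p"
  using sym_pos_def_mat_nonneg[OF assms, of q] unfolding energy_def by simp

lemma norm_Minv_nonneg:
  assumes "sym_pos_def_mat M"
  shows "0 \<le> norm_Minv M f"
  using sym_pos_def_mat_nonneg[OF sym_pos_def_mat_matrix_inv[OF assms]]
  unfolding norm_Minv_def by simp

lemma midpoint_energy_step:
  fixes M K :: "real^'n^'n"
  assumes "transpose (matrix_inv M) = matrix_inv M" and "transpose K = K"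
    and q': "q' = q + dt *\<^sub>R (matrix_inv M *v ((1/2) *\<^sub>R (p + p')))"
    and p': "p' = p - dt *\<^sub>R (K *v ((1/2) *\<^sub>R (q + q'))) + dt *\<^sub>R f"
  shows "2 * (energy M K q' p' - energy M K q p) = dt * ((p + p') \<bullet> (matrix_inv M *v f))"
proof -
  let ?W = "matrix_inv M"
  let ?u = "p + p'" and ?s = "q + q'"
  have symW: "\<And>x y. x \<bullet> (?W *v y) = y \<bullet> (?W *v x)"
   and symK: "\<And>x y. x \<bullet> (K *v y) = y \<bullet> (K *v x)"
    using assms(1,2) transpose_eq_iff_inner_matrix_vector_commute by blast+
  have dp: "p' - p = dt *\<^sub>R f - (dt / 2) *\<^sub>R (K *v ?s)"
    using p' by (simp add: matrix_vector_mult_scaleR algebra_simps)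
  have dq: "q' - q = (dt / 2) *\<^sub>R (?W *v ?u)"
    using q' by (simp add: matrix_vector_mult_scaleR algebra_simps)
  have kinetic: "p' \<bullet> (?W *v p') - p \<bullet> (?W *v p) = ?u \<bullet> (?W *v (p' - p))"
    using symW[of p p'] by (simp add: matrix_vector_mult_diff_distrib inner_add_left inner_diff_right)
  have potential: "q' \<bullet> (K *v q') - q \<bullet> (K *v q) = ?s \<bullet> (K *v (q' - q))"
    using symK[of q q'] by (simp add: matrix_vector_mult_diff_distrib inner_add_left inner_diff_right)
  have cross: "?u \<bullet> (?W *v (K *v ?s)) = ?s \<bullet> (K *v (?W *v ?u))"
    using symW[of ?u "K *v ?s"] symK[of ?s "?W *v ?u"] by (simp add: inner_commute)
  have "2 * (energy M K q' p' - energy M K q p) = ?u \<bullet> (?W *v (p' - p)) + ?s \<bullet> (K *v (q' - q))"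
    unfolding energy_def using kinetic potential by simp
  also have "\<dots> = dt * (?u \<bullet> (?W *v f))"
    unfolding dp dq using cross
    by (simp add: matrix_vector_mult_diff_distrib matrix_vector_mult_scaleR inner_diff_right)
  finally show ?thesis .
qed

lemma abs_work_le_energy:
  assumes M: "sym_pos_def_mat M" and K: "sym_pos_def_mat K"
  shows "\<bar>(p + p') \<bullet> (matrix_inv M *v f)\<bar>
           \<le> sqrt 2 * (sqrt (energy M K q p) + sqrt (energy M K q' p')) * norm_Minv M f"
proof -
  have W: "sym_pos_def_mat (matrix_inv M)" using sym_pos_def_mat_matrix_inv[OF M] .
  have nf: "0 \<le> norm_Minv M f" using norm_Minv_nonneg[OF M] .
  have bound: "\<bar>x \<bullet> (matrix_inv M *v f)\<bar> \<le> sqrt 2 * sqrt (energy M K y x) * norm_Minv M f" for x y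
  proof -
    have "sqrt (x \<bullet> (matrix_inv M *v x)) \<le> sqrt (2 * energy M K y x)"
      using kinetic_le_energy[OF K] by (rule real_sqrt_le_mono)
    then have "sqrt (x \<bullet> (matrix_inv M *v x)) * norm_Minv M f
               \<le> sqrt 2 * sqrt (energy M K y x) * norm_Minv M f"
      using nf by (simp add: real_sqrt_mult mult_right_mono)
    moreover have "\<bar>x \<bullet> (matrix_inv M *v f)\<bar> \<le> sqrt (x \<bullet> (matrix_inv M *v x)) * norm_Minv M f"
      using quadratic_form_cauchy_schwarz W sym_pos_def_mat_nonneg
      unfolding norm_Minv_def sym_pos_def_mat_def by blast
    ultimately show ?thesis by linarith
  qed
  have "\<bar>(p + p') \<bullet> (matrix_inv M *v f)\<bar>
        \<le> \<bar>p \<bullet> (matrix_inv M *v f)\<bar> + \<bar>p' \<bullet> (matrix_inv M *v f)\<bar>"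
    by (simp add: inner_add_left abs_triangle_ineq)
  also have "\<dots> \<le> sqrt 2 * sqrt (energy M K q p) * norm_Minv M f
                  + sqrt 2 * sqrt (energy M K q' p') * norm_Minv M f"
    by (rule add_mono[OF bound bound])
  finally show ?thesis by (simp add: algebra_simps)
qed

lemma abs_sqrt_diff_le:
  fixes a b c :: real
  assumes "0 \<le> a" and "0 \<le> b" and "0 \<le> c"
    and diff: "\<bar>b - a\<bar> \<le> c * (sqrt b + sqrt a)"
  shows "\<bar>sqrt b - sqrt a\<bar> \<le> c"
proof (cases "sqrt b + sqrt a = 0")
  case True
  then show ?thesis using assms(1-3) by (simp add: add_nonneg_eq_0_iff)
next
  case False
  moreover have "0 \<le> sqrt b + sqrt a" using assms(1,2) by simp
  ultimately have pos: "0 < sqrt b + sqrt a" by linarith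
  have "b - a = (sqrt b - sqrt a) * (sqrt b + sqrt a)"
    using assms(1,2) by (simp add: algebra_simps flip: power2_eq_square)
  with diff have "\<bar>sqrt b - sqrt a\<bar> * (sqrt b + sqrt a) \<le> c * (sqrt b + sqrt a)"
    using pos by (simp add: abs_mult)
  then show ?thesis using pos by (rule mult_right_le_imp_le)
qed

lemma sqrt_energy_midpoint_step:
  fixes M K :: "real^'n^'n"
  assumes M: "sym_pos_def_mat M" and K: "sym_pos_def_mat K" and "dt > 0"
    and q': "q' = q + dt *\<^sub>R (matrix_inv M *v ((1/2) *\<^sub>R (p + p')))"
    and p': "p' = p - dt *\<^sub>R (K *v ((1/2) *\<^sub>R (q + q'))) + dt *\<^sub>R f"
  shows "\<bar>sqrt (energy M K q' p') - sqrt (energy M K q p)\<bar> \<le> dt * (1 / sqrt 2) * norm_Minv M f"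
proof (rule abs_sqrt_diff_le)
  let ?E = "energy M K q p" and ?E' = "energy M K q' p'"
  have symW: "transpose (matrix_inv M) = matrix_inv M"
    using sym_pos_def_mat_matrix_inv[OF M] unfolding sym_pos_def_mat_def by blast
  have symK: "transpose K = K" using K unfolding sym_pos_def_mat_def by blast
  have "2 * \<bar>?E' - ?E\<bar> = \<bar>2 * (?E' - ?E)\<bar>" by (simp only: abs_mult abs_numeral)
  also have "\<dots> = dt * \<bar>(p + p') \<bullet> (matrix_inv M *v f)\<bar>"
    using midpoint_energy_step[OF symW symK q' p'] \<open>dt > 0\<close> by (simp add: abs_mult)
  also have "\<dots> \<le> dt * (sqrt 2 * (sqrt ?E + sqrt ?E') * norm_Minv M f)"
    using abs_work_le_energy[OF M K] \<open>dt > 0\<close> by (simp add: mult_left_mono)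
  finally have "\<bar>?E' - ?E\<bar> \<le> (sqrt 2 / 2) * dt * norm_Minv M f * (sqrt ?E' + sqrt ?E)"
    by (simp add: algebra_simps)
  moreover have "sqrt 2 / 2 = 1 / sqrt (2::real)"
    by (simp add: field_simps)
  ultimately show "\<bar>?E' - ?E\<bar> \<le> dt * (1 / sqrt 2) * norm_Minv M f * (sqrt ?E' + sqrt ?E)"
    by (simp add: mult_ac)
  show "0 \<le> ?E" "0 \<le> ?E'" using energy_nonneg[OF M K] by auto
  show "0 \<le> dt * (1 / sqrt 2) * norm_Minv M f"
    using \<open>dt > 0\<close> norm_Minv_nonneg[OF M] by simp
qed

lemma abs_diff_le_sum_of_steps:
  fixes a b :: "nat \<Rightarrow> real"
  assumes "\<And>k. \<bar>a (Suc k) - a k\<bar> \<le> b k"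
  shows "\<bar>a n - a 0\<bar> \<le> (\<Sum>k<n. b k)"
proof -
  have "\<bar>a n - a 0\<bar> = \<bar>\<Sum>k<n. a (Suc k) - a k\<bar>" by (simp add: sum_lessThan_telescope)
  also have "\<dots> \<le> (\<Sum>k<n. \<bar>a (Suc k) - a k\<bar>)" by (rule sum_abs)
  also have "\<dots> \<le> (\<Sum>k<n. b k)" using assms by (rule sum_mono)
  finally show ?thesis .
qed

theorem mainTheorem2:
  fixes M K :: "real^'n^'n" and dt :: real
    and f q p :: "nat \<Rightarrow> real^'n"
  assumes "sym_pos_def_mat M" and "sym_pos_def_mat K" and "dt > 0"
    and "\<And>n. q (Suc n) = q n + dt *\<^sub>R (matrix_inv M *v ((1/2) *\<^sub>R (p n + p (Suc n))))"
    and "\<And>n. p (Suc n) = p n - dt *\<^sub>R (K *v ((1/2) *\<^sub>R (q n + q (Suc n)))) + dt *\<^sub>R f n"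
  shows "\<bar>sqrt (energy M K (q n) (p n)) - sqrt (energy M K (q 0) (p 0))\<bar>
           \<le> dt * (1 / sqrt 2) * (\<Sum>k<n. norm_Minv M (f k))"
proof -
  have "\<bar>sqrt (energy M K (q n) (p n)) - sqrt (energy M K (q 0) (p 0))\<bar>
        \<le> (\<Sum>k<n. dt * (1 / sqrt 2) * norm_Minv M (f k))"
    using abs_diff_le_sum_of_steps sqrt_energy_midpoint_step[OF assms(1-5)] .
  then show ?thesis by (simp add: sum_distrib_left)
qed

end
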